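(* Let $H$ be a real or complex Hilbert space of dimension $n$, let $N\ge n$, let $F=\{f_i\}_{i=1}^N$ be a Parseval frame for $H$, and let $\{q_i\}_{i=1}^N$ be a weight number sequence. If the canonical dual of $F$ is the unique 1-erasure probabilistic spectrally optimal dual of $F$, then it is the unique 1-erasure probabilistic optimal dual of $F$, and therefore it is an $m$-erasure probabilistic optimal dual of $F$ for every $m$.
   Context: Inner products are linear in the first argument. A frame $F=\{f_i\}_{i=1}^N$ is Parseval if $\sum_i|\langle f,f_i\rangle|^2=\|f\|^2$ for all $f$; its canonical dual is $\{S_F^{-1}f_i\}=\{f_i\}$. Analysis operator: $\Theta_Ff=(\langle f,f_i\rangle)_i$. Synthesis operator: $\Theta_G^*(c)=\sum_ic_ig_i$. A dual of $F$ is a frame $G=\{g_i\}_{i=1}^N$ with $f=\sum_i\langle f,f_i\rangle g_i=\sum_i\langle f,g_i\rangle f_i$ for all $f$. A probability sequence satisfies $0\le p_i\le1$ and $\sum p_i=1$. Weight numbers: $q_i=\frac{\sum_jp_j}{\sum_jp_j-p_i}\cdot\frac{N-1}{n}$ (assumed well defined). For $1\le m\le N$, $\mathcal{D}_m^p$ is the set of $N\times N$ diagonal matrices $D$ for which there is $\Lambda$ with $|\Lambda|=m$, $D_{ii}=q_i$ for $i\in\Lambda$ and $0$ otherwise. Define $d_m^p(F,G)=\max\{\|\Theta_G^*D\Theta_F\|:D\in\mathcal{D}_m^p\}$ (operator norm) and $\mathcal{R}_1^p(F,G)=\max\{\rho(\Theta_G^*D\Theta_F):D\in\mathcal{D}_1^p\}$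 ($\rho$ the spectral radius). $G$ is a 1-erasure probabilistic spectrally optimal dual of $F$ if $\mathcal{R}_1^p(F,G)=\inf\{\mathcal{R}_1^p(F,G'):G'\text{ a dual of }F\}$. Optimal duals (operator norm) are defined recursively: - $G$ is a 1-erasure probabilistic optimal dual if $d_1^p(F,G)=\inf\{d_1^p(F,G'):G'\text{ a dual of }F\}$; - for $m\ge2$, $G$ is an $m$-erasure probabilistic optimal dual if it is an $(m-1)$-erasure probabilistic optimal dual and $d_m^p(F,G)=\inf\{d_m^p(F,G'):G'\text{ an }(m-1)\text{-erasure probabilistic optimal dual of }F\}$. *)

theory Defs
  imports "HOL-Analysis.Analysis"
begin

text \<open>Coordinate model: an n-dimensional Hilbert space over K (K = reals or complexes)
  is modelled as K^n, embedded in complex^'n with n = CARD('n).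
  Frames are indexed by a finite type 'm with N = CARD('m).\<close>

definition cinner :: "complex^'n \<Rightarrow> complex^'n \<Rightarrow> complex" where
  "cinner x y = (\<Sum>k\<in>UNIV. x$k * cnj (y$k))"

definition Hspace :: "complex set \<Rightarrow> (complex^'n) set" where
  "Hspace K = {x. \<forall>k. x$k \<in> K}"

definition analysis_op :: "('m \<Rightarrow> complex^'n) \<Rightarrow> complex^'n \<Rightarrow> ('m \<Rightarrow> complex)" where
  "analysis_op f x = (\<lambda>i. cinner x (f i))"

definition synthesis_op :: "('m::finite \<Rightarrow> complex^'n) \<Rightarrow> ('m \<Rightarrow> complex) \<Rightarrow> complex^'n" where
  "synthesis_op g c = (\<Sum>i\<in>UNIV. c i *s g i)"

definition diag_op :: "('m \<Rightarrow> complex) \<Rightarrow> ('m \<Rightarrow> complex) \<Rightarrow> ('m \<Rightarrow> complex)" where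
  "diag_op D c = (\<lambda>i. D i * c i)"

definition is_frame :: "complex set \<Rightarrow> ('m::finite \<Rightarrow> complex^'n) \<Rightarrow> bool" where
  "is_frame K f \<longleftrightarrow> (\<forall>i. f i \<in> Hspace K) \<and>
     (\<exists>A B. 0 < A \<and> (\<forall>x\<in>Hspace K.
        A * (norm x)^2 \<le> (\<Sum>i\<in>UNIV. (cmod (cinner x (f i)))^2) \<and>
        (\<Sum>i\<in>UNIV. (cmod (cinner x (f i)))^2) \<le> B * (norm x)^2))"

definition is_parseval_frame :: "complex set \<Rightarrow> ('m::finite \<Rightarrow> complex^'n) \<Rightarrow> bool" where
  "is_parseval_frame K f \<longleftrightarrow> (\<forall>i. f i \<in> Hspace K) \<and>
     (\<forall>x\<in>Hspace K. (\<Sum>i\<in>UNIV. (cmod (cinner x (f i)))^2) = (norm x)^2)"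

definition is_dual :: "complex set \<Rightarrow> ('m::finite \<Rightarrow> complex^'n) \<Rightarrow> ('m \<Rightarrow> complex^'n) \<Rightarrow> bool" where
  "is_dual K f g \<longleftrightarrow> is_frame K g \<and>
     (\<forall>x\<in>Hspace K. x = (\<Sum>i\<in>UNIV. cinner x (f i) *s g i) \<and>
                   x = (\<Sum>i\<in>UNIV. cinner x (g i) *s f i))"

definition prob_seq :: "('m::finite \<Rightarrow> real) \<Rightarrow> bool" where
  "prob_seq p \<longleftrightarrow> (\<forall>i. 0 \<le> p i \<and> p i \<le> 1) \<and> (\<Sum>i\<in>UNIV. p i) = 1"

definition weight :: "('m::finite \<Rightarrow> real) \<Rightarrow> 'n itself \<Rightarrow> 'm \<Rightarrow> real" where
  "weight p _ i = (\<Sum>j\<in>UNIV. p j) / ((\<Sum>j\<in>UNIV. p j) - p i)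
                   * (real CARD('m) - 1) / real CARD('n)"

text \<open>Diagonal matrices in D_m^p, represented by their diagonals.\<close>
definition Dset :: "('m::finite \<Rightarrow> real) \<Rightarrow> 'n itself \<Rightarrow> nat \<Rightarrow> ('m \<Rightarrow> complex) set" where
  "Dset p t m = {(\<lambda>i. if i \<in> L then complex_of_real (weight p t i) else 0) | L. card L = m}"

definition op_norm_on :: "complex set \<Rightarrow> (complex^'n \<Rightarrow> complex^'n) \<Rightarrow> real" where
  "op_norm_on K T = Sup {norm (T x) | x. x \<in> Hspace K \<and> norm x \<le> 1}"

text \<open>Spectral radius (via the complexification; all operators here are given by
  formulas that are defined on complex^'n and agree with the complexification).\<close>
definition spec_radius :: "(complex^'n \<Rightarrow> complex^'n) \<Rightarrow> real" where
  "spec_radius T = Sup {cmod l | l. \<exists>x. x \<noteq> 0 \<and> T x = l *s x}"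

definition erasure_op :: "('m::finite \<Rightarrow> complex^'n) \<Rightarrow> ('m \<Rightarrow> complex^'n) \<Rightarrow> ('m \<Rightarrow> complex)
     \<Rightarrow> complex^'n \<Rightarrow> complex^'n" where
  "erasure_op f g D = synthesis_op g \<circ> diag_op D \<circ> analysis_op f"

definition d_err :: "complex set \<Rightarrow> ('m::finite \<Rightarrow> real) \<Rightarrow> nat \<Rightarrow> ('m \<Rightarrow> complex^'n)
     \<Rightarrow> ('m \<Rightarrow> complex^'n) \<Rightarrow> real" where
  "d_err K p m f g = Max ((\<lambda>D. op_norm_on K (erasure_op f g D)) ` Dset p TYPE('n) m)"

definition R1_err :: "('m::finite \<Rightarrow> real) \<Rightarrow> ('m \<Rightarrow> complex^'n) \<Rightarrow> ('m \<Rightarrow> complex^'n) \<Rightarrow> real" where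
  "R1_err p f g = Max ((\<lambda>D. spec_radius (erasure_op f g D)) ` Dset p TYPE('n) 1)"

definition spec_opt_dual :: "complex set \<Rightarrow> ('m::finite \<Rightarrow> real) \<Rightarrow> ('m \<Rightarrow> complex^'n)
     \<Rightarrow> ('m \<Rightarrow> complex^'n) \<Rightarrow> bool" where
  "spec_opt_dual K p f g \<longleftrightarrow> is_dual K f g \<and>
     R1_err p f g = Inf {R1_err p f g' | g'. is_dual K f g'}"

text \<open>m-erasure probabilistic optimal duals; level 0 is just "is a dual" (convenience),
  so level 1 is exactly the paper's 1-erasure notion.\<close>
fun opt_dual :: "complex set \<Rightarrow> ('m::finite \<Rightarrow> real) \<Rightarrow> nat \<Rightarrow> ('m \<Rightarrow> complex^'n)
     \<Rightarrow> ('m \<Rightarrow> complex^'n) \<Rightarrow> bool" where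
  "opt_dual K p 0 f g = is_dual K f g"
| "opt_dual K p (Suc m) f g = (opt_dual K p m f g \<and>
     d_err K p (Suc m) f g = Inf {d_err K p (Suc m) f g' | g'. opt_dual K p m f g'})"

end

theory Submission
  imports Defs
begin

text \<open>For a single erasure at index \<open>i\<close> the error operator is the rank-one map
  \<open>x \<mapsto> q\<^sub>i \<langle>x, f\<^sub>i\<rangle> g\<^sub>i\<close>. Its only possible nonzero eigenvalue is \<open>q\<^sub>i \<langle>g\<^sub>i, f\<^sub>i\<rangle>\<close>, so its
  spectral radius \<open>|q\<^sub>i \<langle>g\<^sub>i, f\<^sub>i\<rangle>|\<close> is at most its operator norm (evaluate at \<open>g\<^sub>i / \<parallel>g\<^sub>i\<parallel>\<close>),
  with equality when \<open>g\<^sub>i = f\<^sub>i\<close> by Cauchy-Schwarz. Hence \<open>R\<^sub>1(F,G) \<le> d\<^sub>1(F,G)\<close> for every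
  dual \<open>G\<close> and \<open>d\<^sub>1(F,F) = R\<^sub>1(F,F)\<close>, so minimality and uniqueness of \<open>F\<close> for \<open>R\<^sub>1\<close> carry over
  to \<open>d\<^sub>1\<close>. Once the 1-erasure optimal dual is unique, each later stage of the recursive
  definition minimises over a singleton.\<close>

lemma cinner_scale_left: "cinner (c *s x) y = c * cinner x y"
  unfolding cinner_def by (simp add: sum_distrib_left mult.assoc)

lemma cinner_zero_left [simp]: "cinner 0 y = 0"
  unfolding cinner_def by simp

lemma cinner_self: "cinner x x = complex_of_real ((norm x)\<^sup>2)"
proof -
  have "cinner x x = (\<Sum>k\<in>UNIV. complex_of_real ((cmod (x$k))\<^sup>2))"
    unfolding cinner_def by (intro sum.cong refl) (metis complex_norm_square)
  also have "\<dots> = complex_of_real ((norm x)\<^sup>2)"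
    unfolding norm_vec_def L2_set_def by (simp add: sum_nonneg)
  finally show ?thesis .
qed

lemma cinner_Cauchy_Schwarz: "cmod (cinner x y) \<le> norm x * norm y"
proof -
  have "cmod (cinner x y) \<le> (\<Sum>k\<in>UNIV. cmod (x$k) * cmod (y$k))"
    unfolding cinner_def by (rule order_trans[OF norm_sum]) (simp add: norm_mult)
  also have "\<dots> \<le> norm x * norm y"
    unfolding norm_vec_def using L2_set_mult_ineq[of "\<lambda>k. cmod (x$k)" "\<lambda>k. cmod (y$k)" UNIV]
    by simp
  finally show ?thesis .
qed

lemma norm_scale_vec: "norm (c *s (x::complex^'n)) = cmod c * norm x"
  unfolding norm_vec_def by (simp add: norm_mult L2_set_right_distrib)

lemma Hspace_zero: "K = \<real> \<or> K = UNIV \<Longrightarrow> 0 \<in> Hspace K"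
  unfolding Hspace_def by auto

lemma Hspace_scale_real:
  "K = \<real> \<or> K = UNIV \<Longrightarrow> x \<in> Hspace K \<Longrightarrow> complex_of_real r *s x \<in> Hspace K"
  unfolding Hspace_def by (auto simp: vector_scalar_mult_def)

lemma op_norm_on_upper:
  assumes bounded: "\<And>y. norm (T y) \<le> B * norm y" and "x \<in> Hspace K" "norm x \<le> 1"
  shows "norm (T x) \<le> op_norm_on K T"
  unfolding op_norm_on_def
proof (rule cSup_upper)
  show "bdd_above {norm (T x) | x. x \<in> Hspace K \<and> norm x \<le> 1}"
  proof (rule bdd_aboveI)
    fix e assume "e \<in> {norm (T x) | x. x \<in> Hspace K \<and> norm x \<le> 1}"
    then obtain y where "e = norm (T y)" "norm y \<le> 1" by blast
    moreover have "B * norm y \<le> \<bar>B\<bar>"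
      using \<open>norm y \<le> 1\<close>
      by (metis abs_ge_self abs_mult abs_norm_cancel mult_left_le order_trans abs_ge_zero)
    ultimately show "e \<le> \<bar>B\<bar>" using bounded[of y] by linarith
  qed
qed (use assms in blast)

lemma op_norm_on_least:
  fixes T :: "complex^'n \<Rightarrow> complex^'n"
  assumes "(0::complex^'n) \<in> Hspace K"
    and "\<And>x. x \<in> Hspace K \<Longrightarrow> norm x \<le> 1 \<Longrightarrow> norm (T x) \<le> C"
  shows "op_norm_on K T \<le> C"
  unfolding op_norm_on_def
proof (rule cSup_least)
  show "{norm (T x) | x. x \<in> Hspace K \<and> norm x \<le> 1} \<noteq> {}"
    using assms(1) by force
next
  fix e assume "e \<in> {norm (T x) | x. x \<in> Hspace K \<and> norm x \<le> 1}"
  then show "e \<le> C" using assms(2) by blast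
qed

definition rank_one_op ::
    "complex \<Rightarrow> complex^'n \<Rightarrow> complex^'n \<Rightarrow> complex^'n \<Rightarrow> complex^'n" where
  "rank_one_op a u v = (\<lambda>x. (a * cinner x u) *s v)"

lemma norm_rank_one_op_le: "norm (rank_one_op a u v x) \<le> cmod a * norm u * norm v * norm x"
proof -
  have "norm (rank_one_op a u v x) = cmod a * cmod (cinner x u) * norm v"
    by (simp add: rank_one_op_def norm_scale_vec norm_mult)
  also have "\<dots> \<le> cmod a * (norm x * norm u) * norm v"
    by (intro mult_right_mono mult_left_mono cinner_Cauchy_Schwarz) auto
  finally show ?thesis by (simp add: mult_ac)
qed

lemma rank_one_op_eigenvalue:
  assumes "rank_one_op a u v x = l *s x" "x \<noteq> 0" "l \<noteq> 0"
  shows "l = a * cinner v u"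
proof -
  define c where "c = a * cinner x u"
  have "x = (c / l) *s v"
    using assms(1,3) unfolding rank_one_op_def c_def
    by (simp add: vec_eq_iff field_simps)
  then have "cinner x u = (c / l) * cinner v u"
    by (metis cinner_scale_left)
  then have "c = (c / l) * (a * cinner v u)"
    by (metis c_def mult.left_commute)
  moreover have "c \<noteq> 0"
    using \<open>x = (c / l) *s v\<close> \<open>x \<noteq> 0\<close> by auto
  ultimately show ?thesis
    using assms(3) by (simp add: field_simps)
qed

lemma spec_radius_rank_one_op: "spec_radius (rank_one_op a u v) = cmod (a * cinner v u)"
  unfolding spec_radius_def
proof (rule cSup_eq_maximum)
  let ?c = "a * cinner v u"
  show "cmod ?c \<in> {cmod l | l. \<exists>x. x \<noteq> 0 \<and> rank_one_op a u v x = l *s x}"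
  proof (cases "v = 0")
    case True
    have "(\<chi> k. (1::complex)) \<noteq> 0" "rank_one_op a u v (\<chi> k. 1) = ?c *s (\<chi> k. 1)"
      using True by (simp_all add: vec_eq_iff rank_one_op_def cinner_def)
    then show ?thesis by blast
  next
    case False
    then show ?thesis by (force simp: rank_one_op_def)
  qed
next
  fix e assume "e \<in> {cmod l | l. \<exists>x. x \<noteq> 0 \<and> rank_one_op a u v x = l *s x}"
  then obtain l x where "e = cmod l" "x \<noteq> 0" "rank_one_op a u v x = l *s x"
    by blast
  then show "e \<le> cmod (a * cinner v u)"
    using rank_one_op_eigenvalue[of a u v x l] by (cases "l = 0") auto
qed

lemma op_norm_on_rank_one_op_ge:
  assumes K: "K = \<real> \<or> K = UNIV" and v: "v \<in> Hspace K"
  shows "cmod (a * cinner v u) \<le> op_norm_on K (rank_one_op a u v)"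
proof (cases "v = 0")
  case True
  then show ?thesis
    using op_norm_on_upper[OF norm_rank_one_op_le Hspace_zero[OF K], of a u v]
    by (simp add: rank_one_op_def)
next
  case False
  define w where "w = complex_of_real (1 / norm v) *s v"
  have "w \<in> Hspace K" unfolding w_def by (rule Hspace_scale_real[OF K v])
  moreover have "norm w \<le> 1" using False by (simp add: w_def norm_scale_vec norm_divide)
  moreover have "norm (rank_one_op a u v w) = cmod (a * cinner v u)"
    using False
    by (simp add: rank_one_op_def w_def norm_scale_vec cinner_scale_left norm_mult norm_divide)
  ultimately show ?thesis using op_norm_on_upper[OF norm_rank_one_op_le] by metis
qed

lemma op_norm_on_rank_one_op_self:
  fixes u :: "complex^'n"
  assumes K: "K = \<real> \<or> K = UNIV" and u: "u \<in> Hspace K"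
  shows "op_norm_on K (rank_one_op a u u) = spec_radius (rank_one_op a u u)"
proof (rule antisym)
  have radius: "spec_radius (rank_one_op a u u) = cmod a * (norm u)\<^sup>2"
    by (simp add: spec_radius_rank_one_op cinner_self norm_mult norm_power)
  show "op_norm_on K (rank_one_op a u u) \<le> spec_radius (rank_one_op a u u)"
    unfolding radius
  proof (rule op_norm_on_least[OF Hspace_zero[OF K]])
    fix x :: "complex^'n" assume "norm x \<le> 1"
    then have "cmod a * norm u * norm u * norm x \<le> cmod a * norm u * norm u"
      by (simp add: mult_left_le)
    then show "norm (rank_one_op a u u x) \<le> cmod a * (norm u)\<^sup>2"
      using norm_rank_one_op_le[of a u u x] by (simp add: power2_eq_square mult_ac)
  qed
  show "spec_radius (rank_one_op a u u) \<le> op_norm_on K (rank_one_op a u u)"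
    using op_norm_on_rank_one_op_ge[OF K u] by (simp add: spec_radius_rank_one_op)
qed

lemma Dset_1:
  fixes p :: "'m::finite \<Rightarrow> real"
  shows "Dset p t 1 = range (\<lambda>i j. if j = i then complex_of_real (weight p t i) else 0)"
proof -
  have "Dset p t 1
      = (\<lambda>L j. if j \<in> L then complex_of_real (weight p t j) else 0) ` {L. card L = 1}"
    unfolding Dset_def by auto
  also have "{L :: 'm set. card L = 1} = range (\<lambda>i. {i})"
    by (auto simp: card_1_singleton_iff)
  finally show ?thesis
    by (simp add: image_image) (rule arg_cong[where f = range], auto simp: fun_eq_iff)
qed

lemma erasure_op_single:
  "erasure_op f g (\<lambda>j. if j = i then c else 0) = rank_one_op c (f i) (g i)"
proof
  fix x
  have "erasure_op f g (\<lambda>j. if j = i then c else 0) x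
      = (\<Sum>j\<in>UNIV. if j = i then (c * cinner x (f i)) *s g i else 0)"
    unfolding erasure_op_def synthesis_op_def diag_op_def analysis_op_def comp_def
    by (intro sum.cong) auto
  also have "\<dots> = rank_one_op c (f i) (g i) x"
    by (simp add: rank_one_op_def)
  finally show "erasure_op f g (\<lambda>j. if j = i then c else 0) x = rank_one_op c (f i) (g i) x" .
qed

lemma R1_err_eq_Max:
  fixes f g :: "'m::finite \<Rightarrow> complex^'n"
  shows "R1_err p f g
    = (MAX i. cmod (complex_of_real (weight p TYPE('n) i) * cinner (g i) (f i)))"
  unfolding R1_err_def Dset_1 image_image erasure_op_single spec_radius_rank_one_op ..

lemma d_err_1_eq_Max:
  fixes f g :: "'m::finite \<Rightarrow> complex^'n"
  shows "d_err K p 1 f g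
    = (MAX i. op_norm_on K (rank_one_op (complex_of_real (weight p TYPE('n) i)) (f i) (g i)))"
  unfolding d_err_def Dset_1 image_image erasure_op_single ..

lemma R1_err_nonneg: "0 \<le> R1_err p f g"
  unfolding R1_err_eq_Max by (rule order_trans[OF norm_ge_zero Max_ge]) auto

lemma is_dual_in_Hspace: "is_dual K f g \<Longrightarrow> g i \<in> Hspace K"
  unfolding is_dual_def is_frame_def by blast

lemma R1_err_le_d_err_1:
  fixes f g :: "'m::finite \<Rightarrow> complex^'n"
  assumes K: "K = \<real> \<or> K = UNIV" and g: "\<And>i. g i \<in> Hspace K"
  shows "R1_err p f g \<le> d_err K p 1 f g"
  unfolding R1_err_eq_Max d_err_1_eq_Max
proof (rule Max.boundedI)
  fix e assume "e \<in> range (\<lambda>i. cmod (complex_of_real (weight p TYPE('n) i) * cinner (g i) (f i)))"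
  then obtain i where "e = cmod (complex_of_real (weight p TYPE('n) i) * cinner (g i) (f i))"
    by blast
  also have "\<dots> \<le> op_norm_on K (rank_one_op (weight p TYPE('n) i) (f i) (g i))"
    by (rule op_norm_on_rank_one_op_ge[OF K g])
  also have "\<dots> \<le> (MAX i. op_norm_on K (rank_one_op (weight p TYPE('n) i) (f i) (g i)))"
    by (rule Max_ge) auto
  finally show "e \<le> (MAX i. op_norm_on K (rank_one_op (weight p TYPE('n) i) (f i) (g i)))" .
qed auto

lemma d_err_1_self:
  assumes K: "K = \<real> \<or> K = UNIV" and f: "\<And>i. f i \<in> Hspace K"
  shows "d_err K p 1 f f = R1_err p f f"
  unfolding R1_err_eq_Max d_err_1_eq_Max
  by (simp add: op_norm_on_rank_one_op_self[OF K f] spec_radius_rank_one_op)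

lemma cInf_image_eq_iff_minimal:
  fixes h :: "'a \<Rightarrow> 'b::conditionally_complete_linorder"
  assumes "x \<in> A" and "bdd_below (h ` A)"
  shows "h x = Inf (h ` A) \<longleftrightarrow> (\<forall>y\<in>A. h x \<le> h y)"
proof
  assume "h x = Inf (h ` A)"
  then show "\<forall>y\<in>A. h x \<le> h y"
    using assms(2) by (simp add: cInf_lower)
next
  assume "\<forall>y\<in>A. h x \<le> h y"
  then show "h x = Inf (h ` A)"
    using assms(1) by (intro cInf_eq_minimum[symmetric]) auto
qed

lemma spec_opt_dual_iff:
  "spec_opt_dual K p f g \<longleftrightarrow>
     is_dual K f g \<and> (\<forall>g'. is_dual K f g' \<longrightarrow> R1_err p f g \<le> R1_err p f g')"
proof -
  have "bdd_below (R1_err p f ` {g'. is_dual K f g'})"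
    by (rule bdd_belowI[of _ 0]) (auto simp: R1_err_nonneg)
  then show ?thesis
    unfolding spec_opt_dual_def setcompr_eq_image by (auto simp: cInf_image_eq_iff_minimal)
qed

lemma opt_dual_1_iff:
  assumes K: "K = \<real> \<or> K = UNIV"
  shows "opt_dual K p 1 f g \<longleftrightarrow>
     is_dual K f g \<and> (\<forall>g'. is_dual K f g' \<longrightarrow> d_err K p 1 f g \<le> d_err K p 1 f g')"
proof -
  have "0 \<le> d_err K p 1 f g'" if "is_dual K f g'" for g'
    using R1_err_nonneg R1_err_le_d_err_1[OF K is_dual_in_Hspace[OF that]] by (rule order_trans)
  then have "bdd_below (d_err K p 1 f ` {g'. is_dual K f g'})"
    by (intro bdd_belowI[of _ 0]) auto
  then show ?thesis
    by (auto simp: setcompr_eq_image cInf_image_eq_iff_minimal)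
qed

lemma opt_dual_unique_Suc:
  assumes "opt_dual K p m f f" and "\<And>g. opt_dual K p m f g \<Longrightarrow> g = f"
  shows "opt_dual K p (Suc m) f f" and "opt_dual K p (Suc m) f g \<Longrightarrow> g = f"
proof -
  have "{d_err K p (Suc m) f g' | g'. opt_dual K p m f g'} = {d_err K p (Suc m) f f}"
    using assms by blast
  then show "opt_dual K p (Suc m) f f"
    using assms(1) by simp
  show "opt_dual K p (Suc m) f g \<Longrightarrow> g = f"
    using assms(2) by simp
qed

lemma opt_dual_unique_upwards:
  assumes "opt_dual K p k f f" and "\<And>g. opt_dual K p k f g \<Longrightarrow> g = f" and "k \<le> m"
  shows "opt_dual K p m f f \<and> (\<forall>g. opt_dual K p m f g \<longrightarrow> g = f)"
  using assms(3)
proof (induction m rule: dec_induct)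
  case base
  then show ?case using assms(1,2) by blast
next
  case (step m)
  then show ?case using opt_dual_unique_Suc[of K p m f] by blast
qed

theorem corollary4p4:
  fixes K :: "complex set" and f :: "'m::finite \<Rightarrow> complex^'n" and p :: "'m \<Rightarrow> real"
  assumes "K = \<real> \<or> K = UNIV"
    and "CARD('n) \<le> CARD('m)"
    and "is_parseval_frame K f"
    and "prob_seq p"
    and "\<forall>i. (\<Sum>j\<in>UNIV. p j) - p i \<noteq> 0"
    and "spec_opt_dual K p f f"
    and "\<forall>g. spec_opt_dual K p f g \<longrightarrow> g = f"
  shows "opt_dual K p 1 f f \<and> (\<forall>g. opt_dual K p 1 f g \<longrightarrow> g = f)
         \<and> (\<forall>m. 1 \<le> m \<and> m \<le> CARD('m) \<longrightarrow> opt_dual K p m f f)"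
proof -
  note K = assms(1)
  have f_in_H: "\<And>i. f i \<in> Hspace K"
    using assms(3) unfolding is_parseval_frame_def by blast
  have "is_dual K f f" and R1_min: "\<And>g. is_dual K f g \<Longrightarrow> R1_err p f f \<le> R1_err p f g"
    using assms(6) unfolding spec_opt_dual_iff by auto
  have R1_le_d: "R1_err p f g \<le> d_err K p 1 f g" if "is_dual K f g" for g
    using R1_err_le_d_err_1[OF K is_dual_in_Hspace[OF that]] .
  have d_eq_R1: "d_err K p 1 f f = R1_err p f f"
    by (rule d_err_1_self[OF K f_in_H])
  have "d_err K p 1 f f \<le> d_err K p 1 f g" if "is_dual K f g" for g
    using d_eq_R1 R1_min[OF that] R1_le_d[OF that] by linarith
  then have opt1: "opt_dual K p 1 f f"
    unfolding opt_dual_1_iff[OF K] using \<open>is_dual K f f\<close> by blast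
  have unique1: "g = f" if "opt_dual K p 1 f g" for g
  proof -
    have g: "is_dual K f g" and "d_err K p 1 f g \<le> d_err K p 1 f f"
      using that \<open>is_dual K f f\<close> unfolding opt_dual_1_iff[OF K] by auto
    then have "R1_err p f g \<le> R1_err p f g'" if "is_dual K f g'" for g'
      using R1_le_d[OF g] d_eq_R1 R1_min[OF that] by linarith
    then have "spec_opt_dual K p f g"
      unfolding spec_opt_dual_iff using g by blast
    then show ?thesis using assms(7) by blast
  qed
  show ?thesis using opt_dual_unique_upwards[OF opt1 unique1] by blast
qed

end
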